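(* Let $M,N,Q$ be positive integers with $N\le M$, let $S=\{\vec b\in\mathbb{F}_2^M: H(\vec b)=N\}$, let $\mathbf{G}\in\mathbb{F}_2^{Q\times M}$ be such that $\vec b\mapsto\mathbf{G}\vec b$ is injective on $S$, let $\vec a,\vec c\in\mathbb{F}_2^M$, and let $T\subseteq S$. Define the operators on $(\mathbb{C}^2)^{\otimes Q}$ $$A_{\pm}=X^{\mathbf{G}\vec a}\sum_{\vec b\in T}(-1)^{\vec c\cdot\vec b}\left(P^{\mathbf{G}\vec b}\pm P^{\mathbf{G}(\vec a\oplus\vec b)}\right).$$ Then each of $A_+$ and $A_-$ is a linear combination of pairwise commuting Pauli strings (elements of $\{I,X,Y,Z\}^{\otimes Q}$); in particular each can be measured in a single (Clifford) measurement basis.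
   Context: For $\vec v\in\mathbb{F}_2^Q$: $X^{\vec v}=\prod_{m=1}^Q\sigma_{x,m}^{\vec v[m]}$ (so $X^{\vec v}|\vec u\rangle=|\vec u\oplus\vec v\rangle$), and $P^{\vec v}=\prod_{m=1}^Q\frac{1+(-1)^{\vec v[m]}\sigma_{z,m}}{2}=|\vec v\rangle\langle\vec v|$ is the projector onto the computational basis state $|\vec v\rangle$. $H(\cdot)$ is Hamming weight, $\oplus$ is bitwise addition mod 2 and $\vec c\cdot\vec b$ is the mod-2 inner product. The operators $A_\pm$ are the (anti-)Hermitian parts (up to a factor) of a linearly encoded fermionic operator $\mathcal{E}(\hat O)=X^{\mathbf{G}\vec a}\sum_{\vec b\in T}(-1)^{\vec c\cdot\vec b}P^{\mathbf{G}\vec b}$. *)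

theory Defs
  imports Complex_Main
begin

(* Bit vectors in F_2^I are functions I => bool (True = 1), for a finite index type I. *)

definition hamming :: "('i::finite \<Rightarrow> bool) \<Rightarrow> nat" where
  "hamming b = card {m. b m}"

definition bxor :: "('i \<Rightarrow> bool) \<Rightarrow> ('i \<Rightarrow> bool) \<Rightarrow> ('i \<Rightarrow> bool)" where
  "bxor u v = (\<lambda>m. u m \<noteq> v m)"

definition bdot :: "('i::finite \<Rightarrow> bool) \<Rightarrow> ('i \<Rightarrow> bool) \<Rightarrow> bool" where
  "bdot c b = odd (card {m. c m \<and> b m})"

definition gmul :: "('q \<Rightarrow> 'm::finite \<Rightarrow> bool) \<Rightarrow> ('m \<Rightarrow> bool) \<Rightarrow> ('q \<Rightarrow> bool)" where
  "gmul G b = (\<lambda>q. odd (card {m. G q m \<and> b m}))"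

(* operators on (C^2)^{\<otimes> Q}, given by their matrix entries <u| A |w> in the computational basis *)
type_synonym 'q op = "('q \<Rightarrow> bool) \<Rightarrow> ('q \<Rightarrow> bool) \<Rightarrow> complex"

definition op_mult :: "'q::finite op \<Rightarrow> 'q op \<Rightarrow> 'q op" where
  "op_mult A B = (\<lambda>u w. \<Sum>v\<in>UNIV. A u v * B v w)"

definition Xop :: "('q \<Rightarrow> bool) \<Rightarrow> 'q op" where
  "Xop v = (\<lambda>u w. if u = bxor w v then 1 else 0)"

definition Pop :: "('q \<Rightarrow> bool) \<Rightarrow> 'q op" where
  "Pop v = (\<lambda>u w. if u = v \<and> w = v then 1 else 0)"

(* A_{\<pm>}, with s = 1 for A_+ and s = -1 for A_- *)
definition A_pm :: "('q::finite \<Rightarrow> 'm::finite \<Rightarrow> bool) \<Rightarrow> ('m \<Rightarrow> bool) \<Rightarrow> ('m \<Rightarrow> bool)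
    \<Rightarrow> ('m \<Rightarrow> bool) set \<Rightarrow> complex \<Rightarrow> 'q op" where
  "A_pm G a c T s = op_mult (Xop (gmul G a))
     (\<lambda>u w. \<Sum>b\<in>T. (if bdot c b then -1 else 1) *
               (Pop (gmul G b) u w + s * Pop (gmul G (bxor a b)) u w))"

datatype pauli = PI | PX | PY | PZ

(* single-qubit Pauli matrices, entries indexed by bool (False = |0>, True = |1>) *)
fun pmat :: "pauli \<Rightarrow> bool \<Rightarrow> bool \<Rightarrow> complex" where
  "pmat PI x y = (if x = y then 1 else 0)"
| "pmat PX x y = (if x \<noteq> y then 1 else 0)"
| "pmat PY x y = (if x = y then 0 else if x then \<i> else - \<i>)"
| "pmat PZ x y = (if x = y then (if x then -1 else 1) else 0)"

definition pauli_string :: "('q::finite \<Rightarrow> pauli) \<Rightarrow> 'q op" where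
  "pauli_string p = (\<lambda>u w. \<Prod>m\<in>UNIV. pmat (p m) (u m) (w m))"

definition commuting_pauli_comb :: "'q::finite op \<Rightarrow> bool" where
  "commuting_pauli_comb A \<longleftrightarrow>
     (\<exists>P :: ('q \<Rightarrow> pauli) set. \<exists>coef :: ('q \<Rightarrow> pauli) \<Rightarrow> complex.
        finite P \<and>
        (\<forall>p\<in>P. \<forall>p'\<in>P. op_mult (pauli_string p) (pauli_string p') =
                          op_mult (pauli_string p') (pauli_string p)) \<and>
        A = (\<lambda>u w. \<Sum>p\<in>P. coef p * pauli_string p u w))"

end

theory Submission
  imports Defs "HOL-Library.FuncSet"
begin

text \<open>
  Fix \<open>v = G a\<close>. Up to phases, the Pauli strings \<open>X^v Z^w\<close> (\<open>w\<close> arbitrary) have the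
  entries \<open>\<langle>u|X^v Z^w|z\<rangle> = [u = z \<oplus> v] \<phi>_w(u)\<close>, and the phase functions \<open>\<phi>_w\<close> are an
  orthogonal basis of all functions of \<open>u\<close>; so every operator \<open>X^v D\<close> with \<open>D\<close> diagonal is a
  combination of these strings. Since \<open>\<phi>_w(u \<oplus> v) = (-1)^(v\<cdot>w) \<phi>_w(u)\<close>, two of them commute
  iff their signs \<open>(-1)^(v\<cdot>w)\<close> agree. By linearity of \<open>G\<close> the diagonal \<open>d\<close> of \<open>A_\<plusminus>\<close>
  satisfies \<open>d(y \<oplus> v) = \<plusminus>d(y)\<close>, and this symmetry kills the coefficient of every string
  whose sign is not \<open>\<plusminus>1\<close>.
\<close>

lemma sum_UNIV_fun_prod:
  fixes F :: "'q::finite \<Rightarrow> 'b::finite \<Rightarrow> 'c::comm_semiring_1"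
  shows "(\<Sum>w\<in>UNIV. \<Prod>m\<in>UNIV. F m (w m)) = (\<Prod>m\<in>UNIV. \<Sum>b\<in>UNIV. F m b)"
  using prod_sum_PiE[of "UNIV::'q set" "\<lambda>_. UNIV::'b set" F] by simp

lemma prod_if_zero:
  fixes f :: "'q::finite \<Rightarrow> 'c::comm_semiring_1"
  shows "(\<Prod>m\<in>UNIV. if P m then f m else 0) = (if \<forall>m. P m then \<Prod>m\<in>UNIV. f m else 0)"
  by (cases "\<forall>m. P m") (auto intro!: prod_zero)

lemma prod_sign_eq_power_card:
  "(\<Prod>m\<in>(UNIV::'q::finite set). if P m then -1 else 1) = (-1::'c::comm_ring_1) ^ card {m. P m}"
  by (simp add: prod.If_cases Collect_conv_if)

lemma odd_card_sym_diff:
  assumes "finite A" "finite B"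
  shows "odd (card ((A - B) \<union> (B - A))) \<longleftrightarrow> odd (card A) \<noteq> odd (card B)"
proof -
  have "card A = card (A - B) + card (A \<inter> B)"
    using card_Int_Diff[OF assms(1), of B] by simp
  moreover have "card B = card (B - A) + card (A \<inter> B)"
    using card_Int_Diff[OF assms(2), of A] by (simp add: Int_commute)
  moreover have "card ((A - B) \<union> (B - A)) = card (A - B) + card (B - A)"
    using assms by (intro card_Un_disjoint) auto
  ultimately show ?thesis by presburger
qed

lemma bxor_bxor [simp]: "bxor (bxor u v) v = u"
  by (auto simp: bxor_def)

lemma bxor_comm: "bxor u v = bxor v u"
  by (auto simp: bxor_def fun_eq_iff)

lemma bxor_eq_iff: "bxor u v = x \<longleftrightarrow> u = bxor x v"
  by (auto simp: bxor_def fun_eq_iff)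

lemma gmul_bxor: "gmul G (bxor a b) = bxor (gmul G a) (gmul G b)"
proof
  fix q
  have "{m. G q m \<and> bxor a b m} =
      ({m. G q m \<and> a m} - {m. G q m \<and> b m}) \<union> ({m. G q m \<and> b m} - {m. G q m \<and> a m})"
    by (auto simp: bxor_def)
  then show "gmul G (bxor a b) q = bxor (gmul G a) (gmul G b) q"
    by (simp add: gmul_def bxor_def odd_card_sym_diff)
qed

definition xz_pauli :: "('q \<Rightarrow> bool) \<Rightarrow> ('q \<Rightarrow> bool) \<Rightarrow> 'q \<Rightarrow> pauli" where
  "xz_pauli v w m = (if v m then (if w m then PY else PX) else (if w m then PZ else PI))"

definition z_part :: "('q \<Rightarrow> pauli) \<Rightarrow> 'q \<Rightarrow> bool" where
  "z_part p = (\<lambda>m. p m = PY \<or> p m = PZ)"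

lemma z_part_xz_pauli [simp]: "z_part (xz_pauli v w) = w"
  by (auto simp: z_part_def xz_pauli_def fun_eq_iff)

text \<open>\<open>xz_phase1 vb wb x\<close> is the nonzero entry of the single-qubit Pauli \<open>xz_pauli\<close> in row \<open>x\<close>.\<close>

definition xz_phase1 :: "bool \<Rightarrow> bool \<Rightarrow> bool \<Rightarrow> complex" where
  "xz_phase1 vb wb x =
     (if vb then (if wb then (if x then \<i> else - \<i>) else 1) else (if wb \<and> x then -1 else 1))"

definition xz_phase :: "('q::finite \<Rightarrow> bool) \<Rightarrow> ('q \<Rightarrow> bool) \<Rightarrow> ('q \<Rightarrow> bool) \<Rightarrow> complex" where
  "xz_phase v w u = (\<Prod>m\<in>UNIV. xz_phase1 (v m) (w m) (u m))"

definition xz_sign :: "('q::finite \<Rightarrow> bool) \<Rightarrow> ('q \<Rightarrow> bool) \<Rightarrow> complex" where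
  "xz_sign v w = (if bdot v w then -1 else 1)"

lemma pauli_string_xz_pauli:
  "pauli_string (xz_pauli v w) u x = (if u = bxor x v then xz_phase v w u else 0)"
proof -
  have "pmat (xz_pauli v w m) (u m) (x m) =
      (if u m = (x m \<noteq> v m) then xz_phase1 (v m) (w m) (u m) else 0)" for m
    by (cases "v m"; cases "w m"; cases "u m"; cases "x m") (auto simp: xz_pauli_def xz_phase1_def)
  then have "pauli_string (xz_pauli v w) u x =
      (\<Prod>m\<in>UNIV. if u m = (x m \<noteq> v m) then xz_phase1 (v m) (w m) (u m) else 0)"
    by (simp only: pauli_string_def)
  then show ?thesis
    unfolding prod_if_zero xz_phase_def by (simp add: bxor_def fun_eq_iff)
qed

lemma xz_phase_bxor: "xz_phase v w (bxor u v) = xz_sign v w * xz_phase v w u"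
proof -
  have "xz_phase v w (bxor u v) =
      (\<Prod>m\<in>UNIV. (if v m \<and> w m then -1 else 1) * xz_phase1 (v m) (w m) (u m))"
    unfolding xz_phase_def by (rule prod.cong) (auto simp: xz_phase1_def bxor_def)
  then show ?thesis
    by (simp add: prod.distrib prod_sign_eq_power_card xz_sign_def bdot_def xz_phase_def)
qed

lemma pauli_string_xz_pauli_mult:
  "op_mult (pauli_string (xz_pauli v w)) (pauli_string (xz_pauli v w')) u z =
     (if u = z then xz_phase v w u * xz_sign v w' * xz_phase v w' u else 0)"
proof -
  have "op_mult (pauli_string (xz_pauli v w)) (pauli_string (xz_pauli v w')) u z =
      (\<Sum>x\<in>UNIV. if x = bxor u v
                  then xz_phase v w u * (if bxor u v = bxor z v then xz_phase v w' (bxor u v) else 0)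
                  else 0)"
    unfolding op_mult_def pauli_string_xz_pauli by (rule sum.cong) (auto simp: bxor_eq_iff)
  also have "\<dots> = xz_phase v w u * (if u = z then xz_phase v w' (bxor u v) else 0)"
    by (simp add: bxor_eq_iff)
  finally show ?thesis
    by (simp add: xz_phase_bxor)
qed

lemma xz_paulis_commute:
  assumes "xz_sign v w = xz_sign v w'"
  shows "op_mult (pauli_string (xz_pauli v w)) (pauli_string (xz_pauli v w')) =
         op_mult (pauli_string (xz_pauli v w')) (pauli_string (xz_pauli v w))"
  using assms by (simp add: fun_eq_iff pauli_string_xz_pauli_mult)

lemma xz_phase1_orthogonal:
  "(\<Sum>b\<in>UNIV. xz_phase1 vb b x * cnj (xz_phase1 vb b y)) = (if x = y then 2 else 0)"
  by (cases vb; cases x; cases y) (auto simp: xz_phase1_def UNIV_bool)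

lemma xz_phase_orthogonal:
  fixes v :: "'q::finite \<Rightarrow> bool"
  shows "(\<Sum>w\<in>UNIV. xz_phase v w u * cnj (xz_phase v w y)) =
         (if u = y then 2 ^ card (UNIV::'q set) else 0)"
proof -
  have "(\<Sum>w\<in>UNIV. xz_phase v w u * cnj (xz_phase v w y)) =
      (\<Sum>w\<in>UNIV. \<Prod>m\<in>UNIV. xz_phase1 (v m) (w m) (u m) * cnj (xz_phase1 (v m) (w m) (y m)))"
    unfolding xz_phase_def by (simp add: prod.distrib cnj_prod)
  also have "\<dots> = (\<Prod>m\<in>(UNIV::'q set). if u m = y m then 2 else 0)"
    using sum_UNIV_fun_prod[of "\<lambda>m b. xz_phase1 (v m) b (u m) * cnj (xz_phase1 (v m) b (y m))"]
    by (simp only: xz_phase1_orthogonal)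
  finally show ?thesis
    by (simp add: prod_if_zero fun_eq_iff)
qed

definition xz_coeff ::
    "('q::finite \<Rightarrow> bool) \<Rightarrow> (('q \<Rightarrow> bool) \<Rightarrow> complex) \<Rightarrow> ('q \<Rightarrow> bool) \<Rightarrow> complex" where
  "xz_coeff v f w = (\<Sum>y\<in>UNIV. f y * cnj (xz_phase v w y)) / 2 ^ card (UNIV::'q set)"

lemma xz_phase_expansion:
  fixes v :: "'q::finite \<Rightarrow> bool"
  shows "(\<Sum>w\<in>UNIV. xz_coeff v f w * xz_phase v w u) = f u"
proof -
  let ?n = "(2::complex) ^ card (UNIV::'q set)"
  have "(\<Sum>w\<in>UNIV. xz_coeff v f w * xz_phase v w u) =
      (\<Sum>w\<in>UNIV. \<Sum>y\<in>UNIV. f y * (xz_phase v w u * cnj (xz_phase v w y))) / ?n"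
    unfolding xz_coeff_def sum_divide_distrib sum_distrib_right
    by (intro sum.cong refl) (simp add: algebra_simps)
  also have "\<dots> = (\<Sum>y\<in>UNIV. f y * (\<Sum>w\<in>UNIV. xz_phase v w u * cnj (xz_phase v w y))) / ?n"
    by (subst sum.swap) (simp add: sum_distrib_left)
  also have "\<dots> = f u"
    by (simp add: xz_phase_orthogonal if_distrib cong: if_cong)
  finally show ?thesis .
qed

lemma xz_coeff_eq_0:
  assumes symm: "\<And>y. f (bxor y v) = s * f y" and s: "s = 1 \<or> s = -1"
    and sign: "xz_sign v w \<noteq> s"
  shows "xz_coeff v f w = 0"
proof -
  let ?X = "\<Sum>y\<in>UNIV. f y * cnj (xz_phase v w y)"
  have "?X = (\<Sum>y\<in>UNIV. f (bxor y v) * cnj (xz_phase v w (bxor y v)))"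
    by (rule sum.reindex_bij_witness[where i="\<lambda>y. bxor y v" and j="\<lambda>y. bxor y v"]) auto
  also have "\<dots> = s * xz_sign v w * ?X"
    unfolding sum_distrib_left
    by (rule sum.cong) (auto simp: symm xz_phase_bxor xz_sign_def)
  also have "s * xz_sign v w = -1"
    using s sign by (auto simp: xz_sign_def)
  finally have "?X = 0" by simp
  then show ?thesis by (simp add: xz_coeff_def)
qed

definition diag_op :: "(('q \<Rightarrow> bool) \<Rightarrow> complex) \<Rightarrow> 'q op" where
  "diag_op d = (\<lambda>u w. if u = w then d u else 0)"

lemma Xop_mult_diag_op:
  "op_mult (Xop v) (diag_op d) u z = (if u = bxor z v then d z else 0)"
proof -
  have "op_mult (Xop v) (diag_op d) u z = (\<Sum>x\<in>UNIV. if x = z then Xop v u z * d z else 0)"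
    unfolding op_mult_def diag_op_def by (rule sum.cong) auto
  then show ?thesis
    by (simp add: Xop_def)
qed

lemma commuting_pauli_comb_Xop_mult_diag_op:
  fixes v :: "'q::finite \<Rightarrow> bool"
  assumes s: "s = 1 \<or> s = -1" and symm: "\<And>z. d (bxor z v) = s * d z"
  shows "commuting_pauli_comb (op_mult (Xop v) (diag_op d))"
proof -
  define f where "f u = d (bxor u v)" for u
  define W where "W = {w. xz_sign v w = s}"
  have "s * s = 1" using s by auto
  then have f_symm: "f (bxor y v) = s * f y" for y
    by (simp add: f_def symm[of "bxor y v", simplified])
  have entries: "op_mult (Xop v) (diag_op d) u z =
      (\<Sum>w\<in>W. xz_coeff v f w * pauli_string (xz_pauli v w) u z)" for u z
  proof -
    have "(\<Sum>w\<in>W. xz_coeff v f w * pauli_string (xz_pauli v w) u z) =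
        (\<Sum>w\<in>UNIV. xz_coeff v f w * pauli_string (xz_pauli v w) u z)"
      by (rule sum.mono_neutral_left)
        (auto simp: W_def xz_coeff_eq_0[where f=f and v=v and s=s, OF f_symm s])
    also have "\<dots> = (if u = bxor z v then \<Sum>w\<in>UNIV. xz_coeff v f w * xz_phase v w u else 0)"
      by (simp add: pauli_string_xz_pauli)
    also have "\<dots> = (if u = bxor z v then f u else 0)"
      by (simp only: xz_phase_expansion)
    finally show ?thesis
      by (simp add: Xop_mult_diag_op f_def)
  qed
  have inj: "inj_on (xz_pauli v) W"
    by (metis inj_onI z_part_xz_pauli)
  show ?thesis
    unfolding commuting_pauli_comb_def
  proof (intro exI conjI)
    show "finite (xz_pauli v ` W)" by simp
    show "\<forall>p\<in>xz_pauli v ` W. \<forall>p'\<in>xz_pauli v ` W.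
        op_mult (pauli_string p) (pauli_string p') = op_mult (pauli_string p') (pauli_string p)"
      by (auto simp: W_def intro!: xz_paulis_commute)
    show "op_mult (Xop v) (diag_op d) =
        (\<lambda>u z. \<Sum>p\<in>xz_pauli v ` W. xz_coeff v f (z_part p) * pauli_string p u z)"
      by (intro ext) (simp add: entries sum.reindex[OF inj])
  qed
qed

definition A_pm_diag ::
    "('q::finite \<Rightarrow> 'm::finite \<Rightarrow> bool) \<Rightarrow> ('m \<Rightarrow> bool) \<Rightarrow> ('m \<Rightarrow> bool) \<Rightarrow> ('m \<Rightarrow> bool) set
     \<Rightarrow> complex \<Rightarrow> ('q \<Rightarrow> bool) \<Rightarrow> complex" where
  "A_pm_diag G a c T s y = (\<Sum>b\<in>T. (if bdot c b then -1 else 1) *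
     ((if y = gmul G b then 1 else 0) + s * (if y = gmul G (bxor a b) then 1 else 0)))"

lemma A_pm_eq_Xop_mult_diag_op:
  "A_pm G a c T s = op_mult (Xop (gmul G a)) (diag_op (A_pm_diag G a c T s))"
proof -
  have "(\<Sum>b\<in>T. (if bdot c b then -1 else 1) *
           (Pop (gmul G b) u w + s * Pop (gmul G (bxor a b)) u w)) =
        diag_op (A_pm_diag G a c T s) u w" (is "?lhs u w = _") for u w
  proof (cases "u = w")
    case True
    then show ?thesis by (simp add: diag_op_def A_pm_diag_def Pop_def)
  next
    case False
    then have "Pop y u w = 0" for y by (auto simp: Pop_def)
    with False show ?thesis by (simp add: diag_op_def)
  qed
  then have "(\<lambda>u w. ?lhs u w) = diag_op (A_pm_diag G a c T s)"
    by blast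
  then show ?thesis
    by (simp only: A_pm_def)
qed

lemma A_pm_diag_bxor:
  assumes "s * s = 1"
  shows "A_pm_diag G a c T s (bxor y (gmul G a)) = s * A_pm_diag G a c T s y"
proof -
  have "s * (x + s * y) = y + s * x" for x y :: complex
    using assms by (simp add: algebra_simps)
  then show ?thesis
    unfolding A_pm_diag_def sum_distrib_left gmul_bxor
    by (intro sum.cong refl) (simp add: bxor_eq_iff bxor_comm[of "gmul G a"] algebra_simps)
qed

theorem lemma3:
  fixes G :: "'q::finite \<Rightarrow> 'm::finite \<Rightarrow> bool"
    and a c :: "'m \<Rightarrow> bool"
    and N :: nat
    and T :: "('m \<Rightarrow> bool) set"
  assumes "1 \<le> N" and "N \<le> card (UNIV :: 'm set)"
    and "inj_on (gmul G) {b. hamming b = N}"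
    and "T \<subseteq> {b. hamming b = N}"
  shows "commuting_pauli_comb (A_pm G a c T 1) \<and> commuting_pauli_comb (A_pm G a c T (-1))"
proof -
  have "commuting_pauli_comb (A_pm G a c T s)" if "s = 1 \<or> s = -1" for s
    unfolding A_pm_eq_Xop_mult_diag_op
  proof (rule commuting_pauli_comb_Xop_mult_diag_op[OF that])
    show "A_pm_diag G a c T s (bxor z (gmul G a)) = s * A_pm_diag G a c T s z" for z
      using that by (intro A_pm_diag_bxor) auto
  qed
  then show ?thesis by simp
qed

end
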